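(* Let $n\ge 1$, $A_0\in\mathbb{R}^{n\times n}$, $E_0\in\mathbb{R}^{n\times 1}$ and $C_0\in\mathbb{R}^{1\times n}$, and suppose the pair $(A_0,C_0)$ is observable. Then the following two statements are equivalent: (1) $\operatorname{rank}\begin{bmatrix} A_0-zI_n & E_0\\ C_0 & 0\end{bmatrix}=n+1$ for all $z\in\mathbb{C}$ (i.e., the triple $(A_0,E_0,C_0)$ has no invariant zeros); (2) $C_0E_0=0,\ C_0A_0E_0=0,\ \dots,\ C_0A_0^{n-2}E_0=0$ and $C_0A_0^{n-1}E_0\neq 0$.
   Context: These matrices describe the single-input single-output discrete-time system $x(k+1)=A_0x(k)+B_0u(k)+E_0f(k)$, $y(k)=C_0x(k)$, with state $x(k)\in\mathbb{R}^n$, known input $u(k)\in\mathbb{R}$, unknown scalar input (total disturbance) $f(k)\in\mathbb{R}$ and output $y(k)\in\mathbb{R}$. A number $z\in\mathbb{C}$ is an invariant zero of $(A_0,E_0,C_0)$ if $\operatorname{rank}\begin{bmatrix} A_0-zI_n & E_0\\ C_0 & 0\end{bmatrix}<n+1$. *)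

theory Defs
  imports "Jordan_Normal_Form.DL_Rank" "Jordan_Normal_Form.Matrix"
begin

definition obs_mat :: "nat \<Rightarrow> real mat \<Rightarrow> real mat \<Rightarrow> real mat" where
  "obs_mat n A C = mat n n (\<lambda>(k, j). (C * (A ^\<^sub>m k)) $$ (0, j))"

definition observable :: "nat \<Rightarrow> real mat \<Rightarrow> real mat \<Rightarrow> bool" where
  "observable n A C \<longleftrightarrow> vec_space.rank n (obs_mat n A C) = n"

definition sys_mat :: "nat \<Rightarrow> real mat \<Rightarrow> real mat \<Rightarrow> real mat \<Rightarrow> complex \<Rightarrow> complex mat" where
  "sys_mat n A E C z =
     four_block_mat (map_mat complex_of_real A - z \<cdot>\<^sub>m 1\<^sub>m n) (map_mat complex_of_real E)
                    (map_mat complex_of_real C) (0\<^sub>m 1 1)"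

end

theory Submission
  imports Defs "HOL-Computational_Algebra.Fundamental_Theorem_Algebra"
begin

(* Work over the complex numbers in the coordinates xi_j = c A^j x (j < n), which observability
   turns into a linear isomorphism, and let m_j = c A^j e be the Markov parameters. A kernel
   vector (x, w) of [A - zI, e; c, 0] with w = -1 amounts to xi_0 = 0, xi_(j+1) = z xi_j + m_j,
   plus one closing equation expressing c A^n x linearly in xi. The recursion forces
   xi_j = p_j(z) with p_j = sum_(i<j) m_i X^(j-1-i), so every root of R = sum_(l<n) b_l p_l - p_n
   is an invariant zero. If m_0 = ... = m_(n-2) = 0 and m_(n-1) ~= 0, the recursion with c x = 0
   forces x = 0 and then w = 0, so there is no invariant zero. Otherwise either all m_j vanish,
   and then R = 0, or the first nonzero m_k has k < n - 1, and then R has degree at least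
   n - 1 - k > 0; in both cases R has a complex root. *)

definition obs_coord :: "'a::comm_ring_1 mat \<Rightarrow> 'a vec \<Rightarrow> nat \<Rightarrow> 'a vec \<Rightarrow> 'a" where
  "obs_coord A c j y = c \<bullet> (A ^\<^sub>m j *\<^sub>v y)"

lemma obs_coord_as_scalar_prod:
  assumes "A \<in> carrier_mat n n" "c \<in> carrier_vec n" "y \<in> carrier_vec n"
  shows "obs_coord A c j y = (transpose_mat (A ^\<^sub>m j) *\<^sub>v c) \<bullet> y"
  using assms by (simp add: obs_coord_def transpose_vec_mult_scalar[of _ n n])

lemma obs_coord_step:
  fixes A :: "'a::comm_ring_1 mat"
  assumes A: "A \<in> carrier_mat n n" and c: "c \<in> carrier_vec n"
    and x: "x \<in> carrier_vec n" and e: "e \<in> carrier_vec n"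
  shows "obs_coord A c j (A *\<^sub>v x - z \<cdot>\<^sub>v x + w \<cdot>\<^sub>v e)
       = obs_coord A c (Suc j) x - z * obs_coord A c j x + w * obs_coord A c j e"
proof -
  define r where "r = transpose_mat (A ^\<^sub>m j) *\<^sub>v c"
  have r: "r \<in> carrier_vec n"
    unfolding r_def using A c by (meson mult_mat_vec_carrier pow_carrier_mat transpose_carrier_mat)
  have "r \<bullet> (A *\<^sub>v x) = obs_coord A c (Suc j) x"
    using A c x by (simp add: r_def obs_coord_def transpose_vec_mult_scalar[of _ n n]
        assoc_mult_mat_vec[of _ n n _ n])
  then show ?thesis
    using A c x e r by (simp add: obs_coord_as_scalar_prod[of A n] r_def[symmetric]
        scalar_prod_add_distrib[of _ n] scalar_prod_minus_distrib[of _ n])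
qed

lemma obs_coord_0 [simp]:
  "A \<in> carrier_mat n n \<Longrightarrow> y \<in> carrier_vec n \<Longrightarrow> obs_coord A c 0 y = c \<bullet> y"
  by (simp add: obs_coord_def)

lemma obs_coord_zero_vec [simp]:
  "A \<in> carrier_mat n n \<Longrightarrow> c \<in> carrier_vec n \<Longrightarrow> obs_coord A c j (0\<^sub>v n) = 0"
  by (metis obs_coord_as_scalar_prod mult_mat_vec_carrier pow_carrier_mat scalar_prod_right_zero
      transpose_carrier_mat zero_carrier_vec)

definition is_obs_matrix :: "nat \<Rightarrow> 'a::comm_ring_1 mat \<Rightarrow> 'a vec \<Rightarrow> 'a mat \<Rightarrow> bool" where
  "is_obs_matrix n A c T \<longleftrightarrow> T \<in> carrier_mat n n \<and>
     (\<forall>y \<in> carrier_vec n. \<forall>j < n. (T *\<^sub>v y) $ j = obs_coord A c j y)"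

lemma obs_coord_eq_zero_imp_zero:
  fixes T :: "'a::field mat"
  assumes T: "is_obs_matrix n A c T" "det T \<noteq> 0"
    and y: "y \<in> carrier_vec n" and zero: "\<And>j. j < n \<Longrightarrow> obs_coord A c j y = 0"
  shows "y = 0\<^sub>v n"
proof -
  have "T *\<^sub>v y = 0\<^sub>v n"
    using T y zero by (intro eq_vecI) (auto simp: is_obs_matrix_def)
  then show ?thesis
    using T y det_0_iff_vec_prod_zero_field[of T n] by (auto simp: is_obs_matrix_def)
qed

lemma obs_matrix_right_inverse:
  fixes T :: "'a::field mat"
  assumes T: "is_obs_matrix n A c T" "det T \<noteq> 0"
  obtains U where "U \<in> carrier_mat n n"
    "\<And>\<xi> j. \<xi> \<in> carrier_vec n \<Longrightarrow> j < n \<Longrightarrow> obs_coord A c j (U *\<^sub>v \<xi>) = \<xi> $ j"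
proof -
  have Tc: "T \<in> carrier_mat n n" using T by (simp add: is_obs_matrix_def)
  obtain U where U: "U \<in> carrier_mat n n" and TU: "T * U = 1\<^sub>m n"
    using det_non_zero_imp_unit[OF Tc T(2), of "()"] by (auto simp: Units_def ring_mat_def)
  have "obs_coord A c j (U *\<^sub>v \<xi>) = \<xi> $ j" if "\<xi> \<in> carrier_vec n" "j < n" for \<xi> j
  proof -
    have "obs_coord A c j (U *\<^sub>v \<xi>) = ((T * U) *\<^sub>v \<xi>) $ j"
      using T U that by (simp add: is_obs_matrix_def assoc_mult_mat_vec[of _ n n _ n])
    then show ?thesis using TU that by simp
  qed
  with U that show ?thesis by blast
qed

definition is_invariant_zero :: "nat \<Rightarrow> 'a::field mat \<Rightarrow> 'a vec \<Rightarrow> 'a vec \<Rightarrow> 'a \<Rightarrow> bool" where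
  "is_invariant_zero n A c e z \<longleftrightarrow> (\<exists>x w. x \<in> carrier_vec n \<and> (x \<noteq> 0\<^sub>v n \<or> w \<noteq> 0) \<and>
     A *\<^sub>v x - z \<cdot>\<^sub>v x + w \<cdot>\<^sub>v e = 0\<^sub>v n \<and> c \<bullet> x = 0)"

lemma no_invariant_zero_if_relative_degree:
  fixes A :: "'a::field mat"
  assumes A: "A \<in> carrier_mat n n" and c: "c \<in> carrier_vec n" and e: "e \<in> carrier_vec n"
    and T: "is_obs_matrix n A c T" "det T \<noteq> 0"
    and markov_zero: "\<forall>k < n - 1. obs_coord A c k e = 0"
    and markov_last: "obs_coord A c (n - 1) e \<noteq> 0"
  shows "\<not> is_invariant_zero n A c e z"
proof
  assume "is_invariant_zero n A c e z"
  then obtain x w where x: "x \<in> carrier_vec n" and nontrivial: "x \<noteq> 0\<^sub>v n \<or> w \<noteq> 0"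
    and eq: "A *\<^sub>v x - z \<cdot>\<^sub>v x + w \<cdot>\<^sub>v e = 0\<^sub>v n" and cx: "c \<bullet> x = 0"
    unfolding is_invariant_zero_def by blast
  have step: "obs_coord A c (Suc j) x = z * obs_coord A c j x - w * obs_coord A c j e" for j
    using obs_coord_step[OF A c x e, of j z w] eq A c by (simp add: algebra_simps)
  have coords_x: "obs_coord A c j x = 0" if "j < n" for j
    using that
  proof (induction j)
    case 0
    then show ?case using A x cx by simp
  next
    case (Suc j)
    then show ?case using step[of j] markov_zero by simp
  qed
  then have "x = 0\<^sub>v n"
    using obs_coord_eq_zero_imp_zero[OF T x] by blast
  moreover have "w = 0"
    using step[of "n - 1"] coords_x markov_last \<open>x = 0\<^sub>v n\<close> A c by simp
  ultimately show False using nontrivial by blast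
qed

fun rev_prefix_poly :: "(nat \<Rightarrow> 'a::comm_ring_1) \<Rightarrow> nat \<Rightarrow> 'a poly" where
  "rev_prefix_poly a 0 = 0"
| "rev_prefix_poly a (Suc j) = pCons (a j) (rev_prefix_poly a j)"

lemma coeff_rev_prefix_poly:
  "coeff (rev_prefix_poly a j) d = (if d < j then a (j - 1 - d) else 0)"
  by (induction j arbitrary: d) (auto simp: coeff_pCons split: nat.split)

lemma coeff_rev_prefix_poly_combination:
  assumes "k < n" and "\<forall>i < k. a i = 0"
  shows "coeff ((\<Sum>l<n. smult (b l) (rev_prefix_poly a l)) - rev_prefix_poly a n) (n - 1 - k) = - a k"
proof -
  have "coeff (rev_prefix_poly a l) (n - 1 - k) = 0" if "l < n" for l
    using assms that by (simp add: coeff_rev_prefix_poly)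
  then show ?thesis
    using assms by (simp add: coeff_sum coeff_rev_prefix_poly)
qed

lemma rev_prefix_poly_combination_has_root:
  fixes a b :: "nat \<Rightarrow> complex"
  assumes "\<not> ((\<forall>k < n - 1. a k = 0) \<and> a (n - 1) \<noteq> 0)"
  shows "\<exists>z. poly ((\<Sum>l<n. smult (b l) (rev_prefix_poly a l)) - rev_prefix_poly a n) z = 0"
    (is "\<exists>z. poly ?R z = 0")
proof (cases "\<forall>k < n. a k = 0")
  case True
  then have "rev_prefix_poly a l = 0" if "l \<le> n" for l
    using that by (intro poly_eqI) (simp add: coeff_rev_prefix_poly)
  then show ?thesis by simp
next
  case False
  then obtain k0 where "k0 < n" "a k0 \<noteq> 0" by blast
  define k where "k = (LEAST k. a k \<noteq> 0)"
  have ak: "a k \<noteq> 0" unfolding k_def by (rule LeastI[of _ k0]) fact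
  have below: "\<forall>i < k. a i = 0" unfolding k_def using not_less_Least by blast
  have "k \<le> k0" unfolding k_def by (rule Least_le) fact
  with \<open>k0 < n\<close> have "k < n" by simp
  have "k < n - 1"
    using assms ak below \<open>k < n\<close> by (cases "k = n - 1") auto
  have "coeff ?R (n - 1 - k) \<noteq> 0"
    using coeff_rev_prefix_poly_combination[OF \<open>k < n\<close> below, of b] ak by simp
  with \<open>k < n - 1\<close> have "degree ?R > 0"
    by (metis le_degree not_le le_zero_eq zero_less_diff)
  then have "\<not> constant (poly ?R)"
    by (simp add: constant_degree)
  then show ?thesis by (rule fundamental_theorem_of_algebra)
qed

lemma invariant_zero_if_root:
  fixes A :: "'a::field mat"
  assumes A: "A \<in> carrier_mat n n" and c: "c \<in> carrier_vec n" and e: "e \<in> carrier_vec n"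
    and T: "is_obs_matrix n A c T" "det T \<noteq> 0"
  defines "m \<equiv> \<lambda>k. obs_coord A c k e"
  obtains b where "\<And>z. poly ((\<Sum>l<n. smult (b l) (rev_prefix_poly m l)) - rev_prefix_poly m n) z = 0
    \<Longrightarrow> is_invariant_zero n A c e z"
proof -
  obtain U where U: "U \<in> carrier_mat n n"
    and U_inv: "\<And>\<xi> j. \<xi> \<in> carrier_vec n \<Longrightarrow> j < n \<Longrightarrow> obs_coord A c j (U *\<^sub>v \<xi>) = \<xi> $ j"
    using obs_matrix_right_inverse[OF T] by blast
  \<comment> \<open>In the coordinates \<open>\<xi> = T x\<close>, the functional \<open>x \<mapsto> c A\<^sup>n x\<close> is \<open>\<xi> \<mapsto> b \<bullet> \<xi>\<close>.\<close>
  define b where "b = transpose_mat (A ^\<^sub>m n * U) *\<^sub>v c"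
  have "is_invariant_zero n A c e z"
    if root: "poly ((\<Sum>l<n. smult (b $ l) (rev_prefix_poly m l)) - rev_prefix_poly m n) z = 0" for z
  proof -
    \<comment> \<open>With \<open>w = -1\<close> the kernel equations read \<open>\<xi> 0 = 0\<close>, \<open>\<xi> (j + 1) = z \<xi> j + m j\<close>,
      solved by \<open>\<xi> j = p j (z)\<close>; the root condition is the last equation.\<close>
    define \<xi> where "\<xi> = vec n (\<lambda>j. poly (rev_prefix_poly m j) z)"
    define x where "x = U *\<^sub>v \<xi>"
    have x: "x \<in> carrier_vec n" using U by (simp add: x_def \<xi>_def)
    have \<xi>: "\<xi> \<in> carrier_vec n" by (simp add: \<xi>_def)
    have "obs_coord A c n x = c \<bullet> ((A ^\<^sub>m n * U) *\<^sub>v \<xi>)"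
      using A U \<xi> by (simp add: x_def obs_coord_def assoc_mult_mat_vec[of _ n n _ n])
    also have "\<dots> = b \<bullet> \<xi>"
      unfolding b_def using A U c \<xi> by (intro transpose_vec_mult_scalar[symmetric]) auto
    also have "\<dots> = poly (rev_prefix_poly m n) z"
      using root by (simp add: \<xi>_def scalar_prod_def poly_sum atLeast0LessThan)
    finally have coords_x: "obs_coord A c j x = poly (rev_prefix_poly m j) z" if "j \<le> n" for j
      using U_inv[of \<xi> j] that by (cases "j = n") (simp_all add: x_def \<xi>_def)
    have "obs_coord A c j (A *\<^sub>v x - z \<cdot>\<^sub>v x + (- 1) \<cdot>\<^sub>v e) = 0" if "j < n" for j
      using that obs_coord_step[OF A c x e, of j z "- 1"] coords_x[of j] coords_x[of "Suc j"]
      by (simp add: m_def)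
    then have "A *\<^sub>v x - z \<cdot>\<^sub>v x + (- 1) \<cdot>\<^sub>v e = 0\<^sub>v n"
      using A x e by (intro obs_coord_eq_zero_imp_zero[OF T]) auto
    moreover have "c \<bullet> x = 0"
      using coords_x[of 0] A x by simp
    ultimately show ?thesis
      using x unfolding is_invariant_zero_def by (intro exI[of _ x] exI[of _ "- 1"]) simp
  qed
  then show ?thesis using that[of "\<lambda>l. b $ l"] by blast
qed

lemma no_invariant_zero_iff_relative_degree:
  fixes A :: "complex mat"
  assumes A: "A \<in> carrier_mat n n" and c: "c \<in> carrier_vec n" and e: "e \<in> carrier_vec n"
    and T: "is_obs_matrix n A c T" "det T \<noteq> 0"
  shows "(\<forall>z. \<not> is_invariant_zero n A c e z) \<longleftrightarrow>
    (\<forall>k < n - 1. obs_coord A c k e = 0) \<and> obs_coord A c (n - 1) e \<noteq> 0"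
proof
  assume no_zero: "\<forall>z. \<not> is_invariant_zero n A c e z"
  obtain b where "\<And>z. poly ((\<Sum>l<n. smult (b l) (rev_prefix_poly (\<lambda>k. obs_coord A c k e) l))
      - rev_prefix_poly (\<lambda>k. obs_coord A c k e) n) z = 0 \<Longrightarrow> is_invariant_zero n A c e z"
    using invariant_zero_if_root[OF A c e T] by blast
  with no_zero show "(\<forall>k < n - 1. obs_coord A c k e = 0) \<and> obs_coord A c (n - 1) e \<noteq> 0"
    using rev_prefix_poly_combination_has_root[where a = "\<lambda>k. obs_coord A c k e" and b = b] by blast
next
  assume "(\<forall>k < n - 1. obs_coord A c k e = 0) \<and> obs_coord A c (n - 1) e \<noteq> 0"
  then show "\<forall>z. \<not> is_invariant_zero n A c e z"
    using no_invariant_zero_if_relative_degree[OF A c e T] by blast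
qed

lemma append_vec_eq_zero_iff:
  assumes "a \<in> carrier_vec n"
  shows "a @\<^sub>v b = 0\<^sub>v (n + m) \<longleftrightarrow> a = 0\<^sub>v n \<and> b = 0\<^sub>v m"
proof -
  have "0\<^sub>v (n + m) = 0\<^sub>v n @\<^sub>v (0\<^sub>v m :: 'a vec)"
    by (rule eq_vecI) auto
  then show ?thesis using append_vec_eq[OF assms] by simp
qed

lemma four_block_mult_append:
  fixes A :: "'a::comm_ring_1 mat"
  assumes A: "A \<in> carrier_mat n n" and E: "E \<in> carrier_mat n 1" and C: "C \<in> carrier_mat 1 n"
    and x: "x \<in> carrier_vec n"
  shows "four_block_mat (A - z \<cdot>\<^sub>m 1\<^sub>m n) E C (0\<^sub>m 1 1) *\<^sub>v (x @\<^sub>v vec 1 (\<lambda>_. w))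
     = (A *\<^sub>v x - z \<cdot>\<^sub>v x + w \<cdot>\<^sub>v col E 0) @\<^sub>v vec 1 (\<lambda>_. row C 0 \<bullet> x)"
proof -
  have "four_block_mat (A - z \<cdot>\<^sub>m 1\<^sub>m n) E C (0\<^sub>m 1 1) *\<^sub>v (x @\<^sub>v vec 1 (\<lambda>_. w))
      = ((A - z \<cdot>\<^sub>m 1\<^sub>m n) *\<^sub>v x + E *\<^sub>v vec 1 (\<lambda>_. w)) @\<^sub>v (C *\<^sub>v x + 0\<^sub>m 1 1 *\<^sub>v vec 1 (\<lambda>_. w))"
    using A E C x by (intro four_block_mat_mult_vec) auto
  also have "(A - z \<cdot>\<^sub>m 1\<^sub>m n) *\<^sub>v x = A *\<^sub>v x - z \<cdot>\<^sub>v x"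
    using A x by (auto simp: minus_mult_distrib_mat_vec[of _ n n] intro!: arg_cong2[where f = minus])
  also have "E *\<^sub>v vec 1 (\<lambda>_. w) = w \<cdot>\<^sub>v col E 0"
    using E by (intro eq_vecI) (auto simp: scalar_prod_def)
  also have "C *\<^sub>v x + 0\<^sub>m 1 1 *\<^sub>v vec 1 (\<lambda>_. w) = vec 1 (\<lambda>_. row C 0 \<bullet> x)"
    using C x by (intro eq_vecI) auto
  finally show ?thesis .
qed

lemma vec_eq_vec_first_append_last:
  "v \<in> carrier_vec (n + 1) \<Longrightarrow> v = vec_first v n @\<^sub>v vec 1 (\<lambda>_. v $ n)"
  by (rule eq_vecI) (auto simp: vec_first_def less_Suc_eq)

lemma det_system_matrix_eq_0_iff:
  fixes A :: "'a::field mat"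
  assumes A: "A \<in> carrier_mat n n" and E: "E \<in> carrier_mat n 1" and C: "C \<in> carrier_mat 1 n"
  shows "det (four_block_mat (A - z \<cdot>\<^sub>m 1\<^sub>m n) E C (0\<^sub>m 1 1)) = 0
    \<longleftrightarrow> is_invariant_zero n A (row C 0) (col E 0) z"
proof -
  let ?S = "four_block_mat (A - z \<cdot>\<^sub>m 1\<^sub>m n) E C (0\<^sub>m 1 1)"
  have S: "?S \<in> carrier_mat (n + 1) (n + 1)"
    using A E C by (intro four_block_carrier_mat) auto
  have single_eq_0: "vec 1 (\<lambda>_. t) = 0\<^sub>v 1 \<longleftrightarrow> t = 0" for t :: 'a
    by (auto simp: vec_eq_iff)
  have kernel: "?S *\<^sub>v (x @\<^sub>v vec 1 (\<lambda>_. w)) = 0\<^sub>v (n + 1) \<longleftrightarrow>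
      A *\<^sub>v x - z \<cdot>\<^sub>v x + w \<cdot>\<^sub>v col E 0 = 0\<^sub>v n \<and> row C 0 \<bullet> x = 0"
    if x: "x \<in> carrier_vec n" for x w
  proof -
    have y: "A *\<^sub>v x - z \<cdot>\<^sub>v x + w \<cdot>\<^sub>v col E 0 \<in> carrier_vec n"
      using A E x by (simp add: col_def)
    show ?thesis
      by (simp only: four_block_mult_append[OF A E C x] append_vec_eq_zero_iff[OF y] single_eq_0)
  qed
  have nonzero: "x @\<^sub>v vec 1 (\<lambda>_. w) \<noteq> 0\<^sub>v (n + 1) \<longleftrightarrow> x \<noteq> 0\<^sub>v n \<or> w \<noteq> 0"
    if "x \<in> carrier_vec n" for x :: "'a vec" and w
    by (simp only: append_vec_eq_zero_iff[OF that] single_eq_0 de_Morgan_conj)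
  show ?thesis
    unfolding det_0_iff_vec_prod_zero_field[OF S] is_invariant_zero_def
  proof (intro iffI; elim exE conjE)
    fix v assume v: "v \<in> carrier_vec (n + 1)" "v \<noteq> 0\<^sub>v (n + 1)" "?S *\<^sub>v v = 0\<^sub>v (n + 1)"
    define x w where "x = vec_first v n" and "w = v $ n"
    have x: "x \<in> carrier_vec n" unfolding x_def by (rule vec_first_carrier)
    have split: "v = x @\<^sub>v vec 1 (\<lambda>_. w)"
      unfolding x_def w_def using v(1) by (rule vec_eq_vec_first_append_last)
    show "\<exists>x w. x \<in> carrier_vec n \<and> (x \<noteq> 0\<^sub>v n \<or> w \<noteq> 0) \<and>
        A *\<^sub>v x - z \<cdot>\<^sub>v x + w \<cdot>\<^sub>v col E 0 = 0\<^sub>v n \<and> row C 0 \<bullet> x = 0"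
      using x v(2,3) kernel[OF x, of w, folded split] nonzero[OF x, of w, folded split] by blast
  next
    fix x w assume x: "x \<in> carrier_vec n" and "x \<noteq> 0\<^sub>v n \<or> w \<noteq> 0"
      "A *\<^sub>v x - z \<cdot>\<^sub>v x + w \<cdot>\<^sub>v col E 0 = 0\<^sub>v n" "row C 0 \<bullet> x = 0"
    then show "\<exists>v. v \<in> carrier_vec (n + 1) \<and> v \<noteq> 0\<^sub>v (n + 1) \<and> ?S *\<^sub>v v = 0\<^sub>v (n + 1)"
      using kernel[OF x, of w] nonzero[OF x, of w] append_carrier_vec[OF x, of "vec 1 (\<lambda>_. w)" 1]
      by (intro exI[of _ "x @\<^sub>v vec 1 (\<lambda>_. w)"]) simp
  qed
qed

lemma row_mult_scalar_prod:
  fixes C :: "'a::comm_ring_1 mat"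
  assumes "C \<in> carrier_mat 1 n" "B \<in> carrier_mat n n" "y \<in> carrier_vec n"
  shows "row (C * B) 0 \<bullet> y = row C 0 \<bullet> (B *\<^sub>v y)"
proof -
  have "row (C * B) 0 \<bullet> y = ((C * B) *\<^sub>v y) $ 0"
    by (rule index_mult_mat_vec[symmetric]) (use assms in simp)
  also have "(C * B) *\<^sub>v y = C *\<^sub>v (B *\<^sub>v y)"
    by (rule assoc_mult_mat_vec) (use assms in auto)
  also have "(C *\<^sub>v (B *\<^sub>v y)) $ 0 = row C 0 \<bullet> (B *\<^sub>v y)"
    by (rule index_mult_mat_vec) (use assms in simp)
  finally show ?thesis .
qed

lemma obs_coord_row_col:
  fixes C :: "'a::comm_ring_1 mat"
  assumes C: "C \<in> carrier_mat 1 n" and A: "A \<in> carrier_mat n n" and E: "E \<in> carrier_mat n 1"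
  shows "obs_coord A (row C 0) k (col E 0) = (C * A ^\<^sub>m k * E) $$ (0, 0)"
proof -
  have "(C * A ^\<^sub>m k * E) $$ (0, 0) = row (C * A ^\<^sub>m k) 0 \<bullet> col E 0"
    using assms by (intro index_mult_mat) auto
  also have "\<dots> = row C 0 \<bullet> (A ^\<^sub>m k *\<^sub>v col E 0)"
    using assms by (intro row_mult_scalar_prod) (auto simp: col_def)
  finally show ?thesis by (simp add: obs_coord_def)
qed

abbreviation complex_mat :: "real mat \<Rightarrow> complex mat" where
  "complex_mat \<equiv> map_mat complex_of_real"

lemma complex_mat_mult_pow:
  assumes "C \<in> carrier_mat m n" "A \<in> carrier_mat n n"
  shows "complex_mat (C * A ^\<^sub>m k) = complex_mat C * complex_mat A ^\<^sub>m k"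
  using assms by (simp add: of_real_hom.mat_hom_mult[of _ m n _ n] of_real_hom.mat_hom_pow)

lemma markov_param_eq_0_iff:
  assumes C: "C \<in> carrier_mat 1 n" and A: "A \<in> carrier_mat n n" and E: "E \<in> carrier_mat n 1"
  shows "C * A ^\<^sub>m k * E = 0\<^sub>m 1 1 \<longleftrightarrow>
    obs_coord (complex_mat A) (row (complex_mat C) 0) k (col (complex_mat E) 0) = 0"
proof -
  have CAE: "C * A ^\<^sub>m k * E \<in> carrier_mat 1 1" using assms by auto
  have "obs_coord (complex_mat A) (row (complex_mat C) 0) k (col (complex_mat E) 0)
      = (complex_mat C * complex_mat A ^\<^sub>m k * complex_mat E) $$ (0, 0)"
    by (rule obs_coord_row_col) (use assms in auto)
  also have "complex_mat C * complex_mat A ^\<^sub>m k * complex_mat E = complex_mat (C * A ^\<^sub>m k * E)"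
    using assms by (simp add: complex_mat_mult_pow[symmetric] of_real_hom.mat_hom_mult[of _ 1 n _ 1])
  also have "complex_mat (C * A ^\<^sub>m k * E) $$ (0, 0) = complex_of_real ((C * A ^\<^sub>m k * E) $$ (0, 0))"
    using CAE by (intro index_map_mat) auto
  finally have "obs_coord (complex_mat A) (row (complex_mat C) 0) k (col (complex_mat E) 0)
      = complex_of_real ((C * A ^\<^sub>m k * E) $$ (0, 0))" .
  moreover have "C * A ^\<^sub>m k * E = 0\<^sub>m 1 1 \<longleftrightarrow> (C * A ^\<^sub>m k * E) $$ (0, 0) = 0"
    using CAE by (auto simp: mat_eq_iff)
  ultimately show ?thesis by simp
qed

lemma is_obs_matrix_obs_mat:
  assumes A: "A \<in> carrier_mat n n" and C: "C \<in> carrier_mat 1 n"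
  shows "is_obs_matrix n (complex_mat A) (row (complex_mat C) 0) (complex_mat (obs_mat n A C))"
  unfolding is_obs_matrix_def
proof (intro conjI ballI allI impI)
  fix y :: "complex vec" and j assume y: "y \<in> carrier_vec n" and j: "j < n"
  have "row (complex_mat (obs_mat n A C)) j = row (complex_mat (C * A ^\<^sub>m j)) 0"
  proof (rule eq_vecI)
    fix i assume "i < dim_vec (row (complex_mat (C * A ^\<^sub>m j)) 0)"
    then have "i < n" using A C by (simp split: if_splits)
    then show "row (complex_mat (obs_mat n A C)) j $ i = row (complex_mat (C * A ^\<^sub>m j)) 0 $ i"
      using A C j by (simp add: obs_mat_def)
  qed (use A C in \<open>simp add: obs_mat_def\<close>)
  also have "complex_mat (C * A ^\<^sub>m j) = complex_mat C * complex_mat A ^\<^sub>m j"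
    using C A by (rule complex_mat_mult_pow)
  finally have "(complex_mat (obs_mat n A C) *\<^sub>v y) $ j = row (complex_mat C * complex_mat A ^\<^sub>m j) 0 \<bullet> y"
    using j by (simp add: obs_mat_def)
  also have "\<dots> = obs_coord (complex_mat A) (row (complex_mat C) 0) j y"
    unfolding obs_coord_def by (rule row_mult_scalar_prod) (use A C y in auto)
  finally show "(complex_mat (obs_mat n A C) *\<^sub>v y) $ j = obs_coord (complex_mat A) (row (complex_mat C) 0) j y" .
qed (simp add: obs_mat_def)

lemma det_obs_mat_neq_0:
  assumes "observable n A C"
  shows "det (complex_mat (obs_mat n A C)) \<noteq> 0"
  using assms vec_space.det_rank_iff[of "obs_mat n A C" n]
  by (simp add: observable_def obs_mat_def)

lemma rank_sys_mat_iff: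
  assumes A: "A \<in> carrier_mat n n" and E: "E \<in> carrier_mat n 1" and C: "C \<in> carrier_mat 1 n"
  shows "vec_space.rank (n + 1) (sys_mat n A E C z) = n + 1 \<longleftrightarrow>
    \<not> is_invariant_zero n (complex_mat A) (row (complex_mat C) 0) (col (complex_mat E) 0) z"
proof -
  have "sys_mat n A E C z \<in> carrier_mat (n + 1) (n + 1)"
    using assms by (auto simp: sys_mat_def intro!: four_block_carrier_mat)
  then have "vec_space.rank (n + 1) (sys_mat n A E C z) = n + 1 \<longleftrightarrow> det (sys_mat n A E C z) \<noteq> 0"
    by (simp add: vec_space.det_rank_iff)
  also have "det (sys_mat n A E C z) = 0 \<longleftrightarrow>
      is_invariant_zero n (complex_mat A) (row (complex_mat C) 0) (col (complex_mat E) 0) z"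
    unfolding sys_mat_def by (rule det_system_matrix_eq_0_iff) (use assms in auto)
  finally show ?thesis .
qed

theorem lemma1:
  fixes n :: nat and A0 E0 C0 :: "real mat"
  assumes "n \<ge> 1"
    and "A0 \<in> carrier_mat n n" and "E0 \<in> carrier_mat n 1" and "C0 \<in> carrier_mat 1 n"
    and "observable n A0 C0"
  shows "(\<forall>z::complex. vec_space.rank (n + 1) (sys_mat n A0 E0 C0 z) = n + 1)
     \<longleftrightarrow> ((\<forall>k < n - 1. C0 * (A0 ^\<^sub>m k) * E0 = 0\<^sub>m 1 1) \<and> C0 * (A0 ^\<^sub>m (n - 1)) * E0 \<noteq> 0\<^sub>m 1 1)"
proof -
  note A0 = assms(2) and E0 = assms(3) and C0 = assms(4)
  let ?A = "complex_mat A0" and ?c = "row (complex_mat C0) 0" and ?e = "col (complex_mat E0) 0"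
  have A: "?A \<in> carrier_mat n n" and c: "?c \<in> carrier_vec n" and e: "?e \<in> carrier_vec n"
    using A0 C0 E0 by (auto simp: row_def col_def)
  have "(\<forall>z. vec_space.rank (n + 1) (sys_mat n A0 E0 C0 z) = n + 1)
      \<longleftrightarrow> (\<forall>z. \<not> is_invariant_zero n ?A ?c ?e z)"
    using rank_sys_mat_iff[OF A0 E0 C0] by blast
  also have "\<dots> \<longleftrightarrow> (\<forall>k < n - 1. obs_coord ?A ?c k ?e = 0) \<and> obs_coord ?A ?c (n - 1) ?e \<noteq> 0"
    using no_invariant_zero_iff_relative_degree[OF A c e is_obs_matrix_obs_mat[OF A0 C0]
        det_obs_mat_neq_0[OF assms(5)]] .
  also have "\<dots> \<longleftrightarrow> (\<forall>k < n - 1. C0 * A0 ^\<^sub>m k * E0 = 0\<^sub>m 1 1) \<and> C0 * A0 ^\<^sub>m (n - 1) * E0 \<noteq> 0\<^sub>m 1 1"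
    using markov_param_eq_0_iff[OF C0 A0 E0] by simp
  finally show ?thesis .
qed

end
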